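(* Let $n\ge1$, $a>0$, and let $K_a$ be the Kasteleyn matrix of the Aztec diamond of size $n$ with weights $1$ and $a$, i.e. for $x\in\mathtt{B}$, $y\in\mathtt{W}$, $$K_a(x,y)=\begin{cases}1 & x-y=\pm e_1,\\ a\mathrm{i} & x-y=\pm e_2,\\ 0&\text{otherwise.}\end{cases}$$ Let $G_n(\mathtt{w},\mathtt{b})=\sum_{x\in\mathtt{W},\,y\in\mathtt{B}} K_a^{-1}(x,y)\,w_1^{x_1}w_2^{x_2}b_1^{y_1}b_2^{y_2}$. Then $$\begin{aligned}G_n(\mathtt{w},\mathtt{b})=&\ \frac{w_1w_2^2b_2\,f_{n+1}(w_1^2b_1^2)\,f_n(w_2^2b_2^2)}{C(w_1,w_2)}\\ &+(1+\mathrm{i}aw_1^2)\frac{(1+\mathrm{i}ab_2^2)F^{0,0}_n+b_1^2\big(b_2w_1f_n(b_1^2w_1^2)+(\mathrm{i}a+b_2^2)F^{0,1}_n\big)}{C(w_1,w_2)C(b_1,b_2)}\\ &+(\mathrm{i}a+w_1^2)w_2^2\frac{b_1^2b_2^{2n+1}w_1w_2^{2n}f_n(b_1^2w_1^2)+(1+\mathrm{i}ab_2^2)F^{1,0}_n+b_1^2(\mathrm{i}a+b_2^2)F^{1,1}_n}{C(w_1,w_2)C(b_1,b_2)},\end{aligned}$$ where $C(r_1,r_2)=1+r_1^2r_2^2+\mathrm{i}a(r_1^2+r_2^2)$ and $F^{k,l}_n=F^{k,l}_n(\mathtt{w},\mathtt{b},a)$ are as in the context.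
   Context: $\mathrm{i}=\sqrt{-1}$. Aztec diamond of size $n$: white vertices $\mathtt{W}=\{(x_1,x_2): x_1\text{ odd},\ x_2\text{ even},\ 1\le x_1\le 2n-1,\ 0\le x_2\le 2n\}$, black vertices $\mathtt{B}=\{(x_1,x_2): x_1\text{ even},\ x_2\text{ odd},\ 0\le x_1\le 2n,\ 1\le x_2\le 2n-1\}$, $e_1=(1,1)$, $e_2=(-1,1)$. $K_a$ has rows indexed by $\mathtt{B}$ and columns by $\mathtt{W}$; $K_a^{-1}$ is indexed by $\mathtt{W}\times\mathtt{B}$. $f_n(t)=(1-t^n)/(1-t)$. Define $F_n(w,b,a)=-\frac{\mathrm{i}\,a}{1+a^2}\,f_n\!\left(\frac{(1+ba\mathrm{i})(1+wa\mathrm{i})}{1+a^2}\right)$ and $F^{0,0}_n(\mathtt{w},\mathtt{b},a)=F_n(w_1^2,b_2^2,a)w_1b_2$, $F^{0,1}_n(\mathtt{w},\mathtt{b},a)=F_n(-1/w_1^2,-b_2^2,a^{-1})w_1^{2n-1}b_1^{2n}b_2\mathrm{i}/a$, $F^{1,0}_n(\mathtt{w},\mathtt{b},a)=F_n(-w_1^2,-1/b_2^2,a^{-1})w_1w_2^{2n}b_2^{2n-1}\mathrm{i}/a$, $F^{1,1}_n(\mathtt{w},\mathtt{b},a)=F_n(1/w_1^2,1/b_2^2,a)w_1^{2n-1}w_2^{2n}b_1^{2n}b_2^{2n-1}$. *)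

theory Defs
  imports Complex_Main
begin

definition aztec_W :: "nat \<Rightarrow> (int \<times> int) set" where
  "aztec_W n = {(x1, x2). odd x1 \<and> even x2 \<and> 1 \<le> x1 \<and> x1 \<le> 2 * int n - 1
                          \<and> 0 \<le> x2 \<and> x2 \<le> 2 * int n}"

definition aztec_B :: "nat \<Rightarrow> (int \<times> int) set" where
  "aztec_B n = {(x1, x2). even x1 \<and> odd x2 \<and> 0 \<le> x1 \<and> x1 \<le> 2 * int n
                          \<and> 1 \<le> x2 \<and> x2 \<le> 2 * int n - 1}"

text \<open>Kasteleyn matrix entry K_a(x,y), x black, y white; e1 = (1,1), e2 = (-1,1).\<close>
definition kast :: "real \<Rightarrow> int \<times> int \<Rightarrow> int \<times> int \<Rightarrow> complex" where
  "kast a x y =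
     (let d = (fst x - fst y, snd x - snd y) in
      if d = (1, 1) \<or> d = (-1, -1) then 1
      else if d = (-1, 1) \<or> d = (1, -1) then complex_of_real a * \<i>
      else 0)"

definition is_kast_inverse :: "nat \<Rightarrow> real \<Rightarrow> (int \<times> int \<Rightarrow> int \<times> int \<Rightarrow> complex) \<Rightarrow> bool" where
  "is_kast_inverse n a Kinv \<longleftrightarrow>
     (\<forall>x\<in>aztec_B n. \<forall>z\<in>aztec_B n.
        (\<Sum>y\<in>aztec_W n. kast a x y * Kinv y z) = (if x = z then 1 else 0)) \<and>
     (\<forall>x\<in>aztec_W n. \<forall>z\<in>aztec_W n.
        (\<Sum>y\<in>aztec_B n. Kinv x y * kast a y z) = (if x = z then 1 else 0))"

definition gen_G :: "nat \<Rightarrow> (int \<times> int \<Rightarrow> int \<times> int \<Rightarrow> complex) \<Rightarrow>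
                     complex \<Rightarrow> complex \<Rightarrow> complex \<Rightarrow> complex \<Rightarrow> complex" where
  "gen_G n Kinv w1 w2 b1 b2 =
     (\<Sum>x\<in>aztec_W n. \<Sum>y\<in>aztec_B n.
        Kinv x y * w1 ^ nat (fst x) * w2 ^ nat (snd x) * b1 ^ nat (fst y) * b2 ^ nat (snd y))"

text \<open>f_n(t) = (1 - t^n)/(1 - t), extended by its polynomial value n at t = 1.\<close>
definition fpoly :: "nat \<Rightarrow> complex \<Rightarrow> complex" where
  "fpoly n t = (if t = 1 then of_nat n else (1 - t ^ n) / (1 - t))"

definition Fn :: "nat \<Rightarrow> complex \<Rightarrow> complex \<Rightarrow> complex \<Rightarrow> complex" where
  "Fn n w b a = - (\<i> * a) / (1 + a\<^sup>2) * fpoly n ((1 + b * a * \<i>) * (1 + w * a * \<i>) / (1 + a\<^sup>2))"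

definition F00 :: "nat \<Rightarrow> complex \<Rightarrow> complex \<Rightarrow> complex \<Rightarrow> complex \<Rightarrow> complex \<Rightarrow> complex" where
  "F00 n w1 w2 b1 b2 a = Fn n (w1\<^sup>2) (b2\<^sup>2) a * w1 * b2"

definition F01 :: "nat \<Rightarrow> complex \<Rightarrow> complex \<Rightarrow> complex \<Rightarrow> complex \<Rightarrow> complex \<Rightarrow> complex" where
  "F01 n w1 w2 b1 b2 a = Fn n (- 1 / w1\<^sup>2) (- b2\<^sup>2) (1 / a)
      * w1 ^ (2 * n - 1) * b1 ^ (2 * n) * b2 * \<i> / a"

definition F10 :: "nat \<Rightarrow> complex \<Rightarrow> complex \<Rightarrow> complex \<Rightarrow> complex \<Rightarrow> complex \<Rightarrow> complex" where
  "F10 n w1 w2 b1 b2 a = Fn n (- w1\<^sup>2) (- 1 / b2\<^sup>2) (1 / a)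
      * w1 * w2 ^ (2 * n) * b2 ^ (2 * n - 1) * \<i> / a"

definition F11 :: "nat \<Rightarrow> complex \<Rightarrow> complex \<Rightarrow> complex \<Rightarrow> complex \<Rightarrow> complex \<Rightarrow> complex" where
  "F11 n w1 w2 b1 b2 a = Fn n (1 / w1\<^sup>2) (1 / b2\<^sup>2) a
      * w1 ^ (2 * n - 1) * w2 ^ (2 * n) * b1 ^ (2 * n) * b2 ^ (2 * n - 1)"

definition Cden :: "complex \<Rightarrow> complex \<Rightarrow> complex \<Rightarrow> complex" where
  "Cden a r1 r2 = 1 + r1\<^sup>2 * r2\<^sup>2 + \<i> * a * (r1\<^sup>2 + r2\<^sup>2)"

end

theory Submission
  imports Defs "HOL-Computational_Algebra.Polynomial"
begin

text \<open>
  Write u = w1^2, v = w2^2, s = b1^2, t = b2^2 and alpha = i a; then G is w1 b2 times a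
  generating function of K_a^-1 in u, v, s, t. Applying K_a^-1 K_a = 1 to the vector
  u^k v^(l+1) on the black vertices shows that (1 + u v + alpha (u + v)) G is an explicit term
  plus contributions of the boundary rows j = 0 and j = n of white vertices only; symmetrically,
  K_a K_a^-1 = 1 applied to s^(i+1) t^j reduces (1 + s t + alpha (s + t)) G to the boundary
  columns k = 0 and k = n of black vertices. Together, C(w) C(b) G is expressed through four corner polynomials P_jk(u),
  j, k in {0, n}.

  With p = -(1 + alpha u) and q = u + alpha, the vector u^k p^l q^(n-1-l) is annihilated by
  K_a away from the boundary rows, because p (u + alpha) + q (1 + alpha u) = 0. This yields
  q^n P_0k - p^n P_nk = u^k sum_l (t p)^l q^(n-1-l). Since p vanishes at -1/alpha where q does
  not, and the P_jk have degree below n, this relation determines the corner polynomials, and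
  homogeneous geometric sums solving it are exactly the functions F^{k,l}_n.
\<close>

section \<open>Homogeneous geometric sums\<close>

definition geom_sum2 :: "'a::comm_ring_1 \<Rightarrow> 'a \<Rightarrow> nat \<Rightarrow> 'a" where
  "geom_sum2 x y n = (\<Sum>m<n. x ^ m * y ^ (n - 1 - m))"

lemma diff_mult_geom_sum2: "(y - x) * geom_sum2 x y n = y ^ n - x ^ n"
proof (cases n)
  case (Suc m)
  have "x ^ Suc m - y ^ Suc m = (x - y) * (\<Sum>p<Suc m. x ^ p * y ^ (m - p))"
    by (rule diff_power_eq_sum)
  then show ?thesis
    unfolding geom_sum2_def Suc by (simp add: algebra_simps)
qed (simp add: geom_sum2_def)

lemma geom_sum2_mult: "geom_sum2 (c * x) (c * y) n = c ^ (n - 1) * geom_sum2 x y n"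
  unfolding geom_sum2_def sum_distrib_left
proof (rule sum.cong)
  fix m assume "m \<in> {..<n}"
  then have "c ^ (n - 1) = c ^ m * c ^ (n - 1 - m)"
    by (simp flip: power_add)
  then show "(c * x) ^ m * (c * y) ^ (n - 1 - m) = c ^ (n - 1) * (x ^ m * y ^ (n - 1 - m))"
    by (simp add: power_mult_distrib mult_ac)
qed simp

lemma geom_sum2_one_scale: "c ^ (n - 1) * geom_sum2 x 1 n = geom_sum2 (c * x) c n"
  using geom_sum2_mult[of c x 1 n] by simp

lemma poly_geom_sum2: "poly (geom_sum2 p q n) u = geom_sum2 (poly p u) (poly q u) n"
  by (simp add: geom_sum2_def poly_sum)

lemma degree_geom_sum2:
  assumes "degree p \<le> 1" "degree q \<le> 1"
  shows "degree (geom_sum2 p q n) \<le> n - 1"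
  unfolding geom_sum2_def
proof (rule degree_sum_le)
  fix m assume "m \<in> {..<n}"
  have "degree (p ^ m * q ^ (n - 1 - m)) \<le> degree p * m + degree q * (n - 1 - m)"
    by (intro order.trans[OF degree_mult_le] add_mono degree_power_le)
  also have "\<dots> \<le> m + (n - 1 - m)"
    using assms by (intro add_mono) simp_all
  finally show "degree (p ^ m * q ^ (n - 1 - m)) \<le> n - 1"
    using \<open>m \<in> {..<n}\<close> by simp
qed simp

lemma fpoly_eq_sum: "fpoly n x = (\<Sum>m<n. x ^ m)"
  by (simp add: fpoly_def sum_gp_strict)

lemma fpoly_eq_geom_sum2: "fpoly n x = geom_sum2 x 1 n"
  by (simp add: fpoly_eq_sum geom_sum2_def)

lemma fpoly_Suc_eq_sum_atMost: "fpoly (n + 1) x = (\<Sum>k\<le>n. x ^ k)"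
  by (simp add: fpoly_eq_sum lessThan_Suc_atMost)

lemma sum_inverse_cancel_row:
  assumes "finite X" "z \<in> X"
    and "\<forall>x\<in>X. \<forall>z\<in>X. (\<Sum>y\<in>Y. P x y * Q y z) = (if x = z then 1 else (0::'a::comm_semiring_1))"
  shows "(\<Sum>y\<in>Y. (\<Sum>x\<in>X. f x * P x y) * Q y z) = f z"
proof -
  have "(\<Sum>y\<in>Y. (\<Sum>x\<in>X. f x * P x y) * Q y z) = (\<Sum>x\<in>X. f x * (\<Sum>y\<in>Y. P x y * Q y z))"
    by (simp add: sum_distrib_left sum_distrib_right mult.assoc sum.swap[of _ Y])
  also have "\<dots> = (\<Sum>x\<in>X. if x = z then f x else 0)"
    using assms by (intro sum.cong) auto
  also have "\<dots> = f z"
    using assms by simp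
  finally show ?thesis .
qed

lemma sum_inverse_cancel_col:
  assumes "finite Z" "x \<in> Z"
    and "\<forall>x\<in>Z. \<forall>z\<in>Z. (\<Sum>y\<in>Y. P x y * Q y z) = (if x = z then 1 else (0::'a::comm_semiring_1))"
  shows "(\<Sum>y\<in>Y. P x y * (\<Sum>z\<in>Z. Q y z * g z)) = g x"
proof -
  have "(\<Sum>y\<in>Y. P x y * (\<Sum>z\<in>Z. Q y z * g z)) = (\<Sum>z\<in>Z. (\<Sum>y\<in>Y. P x y * Q y z) * g z)"
    by (simp add: sum_distrib_left sum_distrib_right mult.assoc sum.swap[of _ Y])
  also have "\<dots> = (\<Sum>z\<in>Z. if x = z then g z else 0)"
    using assms by (intro sum.cong) auto
  also have "\<dots> = g x"
    using assms by simp
  finally show ?thesis .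
qed

lemma sum_sum_delta:
  assumes "finite K" "finite L"
  shows "(\<Sum>k\<in>K. \<Sum>l\<in>L. f k l * (if k = a \<and> l = b then c else 0)) =
    (if a \<in> K \<and> b \<in> L then f a b * (c::'a::comm_semiring_1) else 0)"
proof -
  have "(\<Sum>k\<in>K. \<Sum>l\<in>L. f k l * (if k = a \<and> l = b then c else 0)) =
      (\<Sum>k\<in>K. if k = a then \<Sum>l\<in>L. if l = b then f k l * c else 0 else 0)"
    by (auto intro!: sum.cong)
  then show ?thesis using assms by simp
qed

lemma sum_swap_pairs:
  "(\<Sum>i\<in>A. \<Sum>j\<in>B. \<Sum>k\<in>C. \<Sum>l\<in>D. f i j k l) = (\<Sum>k\<in>C. \<Sum>l\<in>D. \<Sum>i\<in>A. \<Sum>j\<in>B. f i j k l)"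
proof -
  have "(\<Sum>i\<in>A. \<Sum>j\<in>B. \<Sum>k\<in>C. \<Sum>l\<in>D. f i j k l) = (\<Sum>k\<in>C. \<Sum>i\<in>A. \<Sum>l\<in>D. \<Sum>j\<in>B. f i j k l)"
    by (subst sum.swap) (simp add: sum.swap[of _ B])
  also have "\<dots> = (\<Sum>k\<in>C. \<Sum>l\<in>D. \<Sum>i\<in>A. \<Sum>j\<in>B. f i j k l)"
    by (simp add: sum.swap[of _ A])
  finally show ?thesis .
qed

section \<open>The Kasteleyn matrix in grid coordinates\<close>

definition wvert :: "nat \<Rightarrow> nat \<Rightarrow> int \<times> int" where
  "wvert i j = (2 * int i + 1, 2 * int j)"

definition bvert :: "nat \<Rightarrow> nat \<Rightarrow> int \<times> int" where
  "bvert k l = (2 * int k, 2 * int l + 1)"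

lemma aztec_W_eq_image: "aztec_W n = case_prod wvert ` ({..<n} \<times> {..n})"
proof (intro set_eqI iffI)
  fix x assume "x \<in> aztec_W n"
  then obtain m p where "x = (2 * m + 1, 2 * p)" "0 \<le> m" "m < int n" "0 \<le> p" "p \<le> int n"
    by (auto simp: aztec_W_def elim!: oddE evenE)
  then have "x = wvert (nat m) (nat p)" "nat m < n" "nat p \<le> n"
    by (auto simp: wvert_def)
  then show "x \<in> case_prod wvert ` ({..<n} \<times> {..n})" by force
qed (auto simp: aztec_W_def wvert_def)

lemma aztec_B_eq_image: "aztec_B n = case_prod bvert ` ({..n} \<times> {..<n})"
proof (intro set_eqI iffI)
  fix x assume "x \<in> aztec_B n"
  then obtain m p where "x = (2 * p, 2 * m + 1)" "0 \<le> m" "m < int n" "0 \<le> p" "p \<le> int n"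
    by (auto simp: aztec_B_def elim!: oddE evenE)
  then have "x = bvert (nat p) (nat m)" "nat m < n" "nat p \<le> n"
    by (auto simp: bvert_def)
  then show "x \<in> case_prod bvert ` ({..n} \<times> {..<n})" by force
qed (auto simp: aztec_B_def bvert_def)

lemma sum_aztec_W: "(\<Sum>x\<in>aztec_W n. f x) = (\<Sum>i<n. \<Sum>j\<le>n. f (wvert i j))"
  unfolding aztec_W_eq_image
  by (subst sum.reindex) (auto simp: inj_on_def wvert_def sum.cartesian_product split_def)

lemma sum_aztec_B: "(\<Sum>x\<in>aztec_B n. f x) = (\<Sum>k\<le>n. \<Sum>l<n. f (bvert k l))"
  unfolding aztec_B_eq_image
  by (subst sum.reindex) (auto simp: inj_on_def bvert_def sum.cartesian_product split_def)

lemma kast_white_neighbours: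
  "kast a (bvert k l) (wvert i j) =
     (if k = i + 1 \<and> l = j then 1 else 0) + (if k = i \<and> l = j - 1 then (if 0 < j then 1 else 0) else 0)
   + (if k = i \<and> l = j then complex_of_real a * \<i> else 0)
   + (if k = i + 1 \<and> l = j - 1 then (if 0 < j then complex_of_real a * \<i> else 0) else 0)"
  unfolding kast_def bvert_def wvert_def Let_def by auto

lemma kast_black_neighbours:
  "kast a (bvert k l) (wvert i j) =
     (if i = k - 1 \<and> j = l then (if 0 < k then 1 else 0) else 0) + (if i = k \<and> j = l + 1 then 1 else 0)
   + (if i = k \<and> j = l then complex_of_real a * \<i> else 0)
   + (if i = k - 1 \<and> j = l + 1 then (if 0 < k then complex_of_real a * \<i> else 0) else 0)"
  unfolding kast_def bvert_def wvert_def Let_def by auto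

definition vec_kast :: "complex \<Rightarrow> nat \<Rightarrow> (nat \<Rightarrow> nat \<Rightarrow> complex) \<Rightarrow> nat \<Rightarrow> nat \<Rightarrow> complex" where
  "vec_kast \<alpha> n T i j =
     (if j < n then T (i + 1) j + \<alpha> * T i j else 0)
   + (if 0 < j then T i (j - 1) + \<alpha> * T (i + 1) (j - 1) else 0)"

definition kast_vec :: "complex \<Rightarrow> nat \<Rightarrow> (nat \<Rightarrow> nat \<Rightarrow> complex) \<Rightarrow> nat \<Rightarrow> nat \<Rightarrow> complex" where
  "kast_vec \<alpha> n S k l =
     (if k < n then S k (l + 1) + \<alpha> * S k l else 0)
   + (if 0 < k then S (k - 1) l + \<alpha> * S (k - 1) (l + 1) else 0)"

lemma sum_vec_kast:
  assumes "i < n" "j \<le> n"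
  shows "(\<Sum>k\<le>n. \<Sum>l<n. T k l * kast a (bvert k l) (wvert i j)) = vec_kast (complex_of_real a * \<i>) n T i j"
  using assms
  by (simp add: kast_white_neighbours vec_kast_def distrib_left sum.distrib sum_sum_delta) linarith

lemma sum_kast_vec:
  assumes "k \<le> n" "l < n"
  shows "(\<Sum>i<n. \<Sum>j\<le>n. kast a (bvert k l) (wvert i j) * S i j) = kast_vec (complex_of_real a * \<i>) n S k l"
proof -
  have "(\<Sum>i<n. \<Sum>j\<le>n. kast a (bvert k l) (wvert i j) * S i j) =
      (\<Sum>i<n. \<Sum>j\<le>n. S i j * kast a (bvert k l) (wvert i j))"
    by (simp add: mult.commute)
  also have "\<dots> = kast_vec (complex_of_real a * \<i>) n S k l"
    using assms by (simp add: kast_black_neighbours kast_vec_def distrib_left sum.distrib sum_sum_delta) linarith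
  finally show ?thesis .
qed

lemma vec_kast_inverse:
  assumes "is_kast_inverse n a Kinv" "k \<le> n" "l < n"
  shows "(\<Sum>i<n. \<Sum>j\<le>n. vec_kast (complex_of_real a * \<i>) n T i j * Kinv (wvert i j) (bvert k l)) = T k l"
proof -
  define f where "f x = T (nat (fst x) div 2) (nat (snd x) div 2)" for x :: "int \<times> int"
  have f: "f (bvert k l) = T k l" for k l
    by (simp add: f_def bvert_def nat_add_distrib nat_mult_distrib)
  have "(\<Sum>i<n. \<Sum>j\<le>n. vec_kast (complex_of_real a * \<i>) n T i j * Kinv (wvert i j) (bvert k l)) =
      (\<Sum>y\<in>aztec_W n. (\<Sum>x\<in>aztec_B n. f x * kast a x y) * Kinv y (bvert k l))"
    unfolding sum_aztec_W sum_aztec_B f by (intro sum.cong refl) (simp add: sum_vec_kast)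
  also have "\<dots> = T k l"
    unfolding f[symmetric] by (rule sum_inverse_cancel_row)
      (use assms in \<open>auto simp: is_kast_inverse_def aztec_B_eq_image\<close>)
  finally show ?thesis .
qed

lemma kast_vec_inverse:
  assumes "is_kast_inverse n a Kinv" "i < n" "j \<le> n"
  shows "(\<Sum>k\<le>n. \<Sum>l<n. Kinv (wvert i j) (bvert k l) * kast_vec (complex_of_real a * \<i>) n S k l) = S i j"
proof -
  define g where "g x = S (nat (fst x) div 2) (nat (snd x) div 2)" for x :: "int \<times> int"
  have g: "g (wvert i j) = S i j" for i j
    by (simp add: g_def wvert_def nat_add_distrib nat_mult_distrib)
  have "(\<Sum>k\<le>n. \<Sum>l<n. Kinv (wvert i j) (bvert k l) * kast_vec (complex_of_real a * \<i>) n S k l) =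
      (\<Sum>y\<in>aztec_B n. Kinv (wvert i j) y * (\<Sum>z\<in>aztec_W n. kast a y z * g z))"
    unfolding sum_aztec_W sum_aztec_B g by (intro sum.cong refl) (simp add: sum_kast_vec)
  also have "\<dots> = S i j"
    unfolding g[symmetric] by (rule sum_inverse_cancel_col)
      (use assms in \<open>auto simp: is_kast_inverse_def aztec_W_eq_image\<close>)
  finally show ?thesis .
qed

lemma le_boundary_cases:
  assumes "(j::nat) \<le> n"
  obtains "j = 0" "n = 0" | "j = 0" "0 < n" | m where "j = Suc m" "n = Suc m"
    | m where "j = Suc m" "Suc m < n"
  using assms by (cases j) (auto simp: le_less)

lemma vec_kast_monomial:
  assumes "j \<le> n"
  shows "vec_kast \<alpha> n (\<lambda>k l. u ^ k * v ^ (l + 1)) i j =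
    (1 + u * v + \<alpha> * (u + v)) * (u ^ i * v ^ j)
    - (if j = 0 then (1 + \<alpha> * u) * u ^ i else 0)
    - (if j = n then v ^ (n + 1) * (u + \<alpha>) * u ^ i else 0)"
  using assms by (cases rule: le_boundary_cases) (simp_all add: vec_kast_def algebra_simps)

lemma kast_vec_monomial:
  assumes "k \<le> n"
  shows "kast_vec \<alpha> n (\<lambda>i j. s ^ (i + 1) * t ^ j) k l =
    (1 + s * t + \<alpha> * (s + t)) * (s ^ k * t ^ l)
    - (if k = 0 then (1 + \<alpha> * t) * t ^ l else 0)
    - (if k = n then s ^ (n + 1) * (t + \<alpha>) * t ^ l else 0)"
  using assms by (cases rule: le_boundary_cases) (simp_all add: kast_vec_def algebra_simps)

lemma vec_kast_kernel:
  assumes "j \<le> n" and p: "p = - (1 + \<alpha> * u)" and q: "q = u + \<alpha>"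
  shows "vec_kast \<alpha> n (\<lambda>k l. u ^ k * p ^ l * q ^ (n - 1 - l)) i j =
    (if j = 0 then q ^ n * u ^ i else 0) - (if j = n then p ^ n * u ^ i else 0)"
  using assms(1)
proof (cases rule: le_boundary_cases)
  case 2
  then obtain r where "n = Suc r" using gr0_implies_Suc by blast
  then have "q ^ n = (u + \<alpha>) * q ^ r" by (simp add: q)
  with 2 \<open>n = Suc r\<close> show ?thesis by (simp add: vec_kast_def algebra_simps)
next
  case (3 m)
  then have "vec_kast \<alpha> n (\<lambda>k l. u ^ k * p ^ l * q ^ (n - 1 - l)) i j = (1 + \<alpha> * u) * (u ^ i * p ^ m)"
    by (simp add: vec_kast_def algebra_simps)
  also have "\<dots> = - p * (u ^ i * p ^ m)"
    by (simp only: p minus_minus)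
  also have "\<dots> = - (p ^ n * u ^ i)"
    using 3 by (simp add: mult_ac)
  finally show ?thesis using 3 by simp
next
  case (4 m)
  then obtain r where r: "n = Suc (Suc m) + r"
    using less_imp_Suc_add[OF 4(2)] by auto
  have "p * (u + \<alpha>) + q * (1 + \<alpha> * u) = 0" by (simp add: p q algebra_simps)
  moreover from 4 r have "vec_kast \<alpha> n (\<lambda>k l. u ^ k * p ^ l * q ^ (n - 1 - l)) i j =
      u ^ i * p ^ m * q ^ r * (p * (u + \<alpha>) + q * (1 + \<alpha> * u))"
    by (simp add: vec_kast_def algebra_simps)
  ultimately show ?thesis using 4 r by simp
qed (simp add: vec_kast_def)

section \<open>Relations from the inverse\<close>

lemma white_relation:
  assumes inv: "is_kast_inverse n a Kinv" and kl: "k \<le> n" "l < n"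
  defines "\<alpha> \<equiv> complex_of_real a * \<i>"
  shows "(1 + u * v + \<alpha> * (u + v)) * (\<Sum>i<n. \<Sum>j\<le>n. Kinv (wvert i j) (bvert k l) * (u ^ i * v ^ j)) =
    u ^ k * v ^ (l + 1) + (1 + \<alpha> * u) * (\<Sum>i<n. Kinv (wvert i 0) (bvert k l) * u ^ i)
    + v ^ (n + 1) * (u + \<alpha>) * (\<Sum>i<n. Kinv (wvert i n) (bvert k l) * u ^ i)"
proof -
  define K where "K i j = Kinv (wvert i j) (bvert k l)" for i j
  have "u ^ k * v ^ (l + 1) =
      (\<Sum>i<n. \<Sum>j\<le>n. vec_kast \<alpha> n (\<lambda>k l. u ^ k * v ^ (l + 1)) i j * K i j)"
    using vec_kast_inverse[OF inv kl] unfolding \<alpha>_def K_def by simp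
  also have "\<dots> = (\<Sum>i<n. \<Sum>j\<le>n. (1 + u * v + \<alpha> * (u + v)) * (K i j * (u ^ i * v ^ j))
      - (if j = 0 then (1 + \<alpha> * u) * (K i 0 * u ^ i) else 0)
      - (if j = n then v ^ (n + 1) * (u + \<alpha>) * (K i n * u ^ i) else 0))"
    by (intro sum.cong refl, subst vec_kast_monomial) (auto simp: algebra_simps)
  also have "\<dots> = (1 + u * v + \<alpha> * (u + v)) * (\<Sum>i<n. \<Sum>j\<le>n. K i j * (u ^ i * v ^ j))
      - (1 + \<alpha> * u) * (\<Sum>i<n. K i 0 * u ^ i) - v ^ (n + 1) * (u + \<alpha>) * (\<Sum>i<n. K i n * u ^ i)"
    by (simp add: sum_subtractf sum_distrib_left)
  finally show ?thesis
    unfolding K_def by (simp add: algebra_simps)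
qed

lemma black_relation:
  assumes inv: "is_kast_inverse n a Kinv" and ij: "i < n" "j \<le> n"
  defines "\<alpha> \<equiv> complex_of_real a * \<i>"
  shows "(1 + s * t + \<alpha> * (s + t)) * (\<Sum>k\<le>n. \<Sum>l<n. Kinv (wvert i j) (bvert k l) * (s ^ k * t ^ l)) =
    s ^ (i + 1) * t ^ j + (1 + \<alpha> * t) * (\<Sum>l<n. Kinv (wvert i j) (bvert 0 l) * t ^ l)
    + s ^ (n + 1) * (t + \<alpha>) * (\<Sum>l<n. Kinv (wvert i j) (bvert n l) * t ^ l)"
proof -
  define K where "K k l = Kinv (wvert i j) (bvert k l)" for k l
  have sum_if: "(\<Sum>x\<in>A. if P then f x else 0) = (if P then sum f A else 0)" for P A and f :: "nat \<Rightarrow> complex"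
    by simp
  have "s ^ (i + 1) * t ^ j =
      (\<Sum>k\<le>n. \<Sum>l<n. K k l * kast_vec \<alpha> n (\<lambda>i j. s ^ (i + 1) * t ^ j) k l)"
    using kast_vec_inverse[OF inv ij] unfolding \<alpha>_def K_def by simp
  also have "\<dots> = (\<Sum>k\<le>n. \<Sum>l<n. (1 + s * t + \<alpha> * (s + t)) * (K k l * (s ^ k * t ^ l))
      - (if k = 0 then (1 + \<alpha> * t) * (K 0 l * t ^ l) else 0)
      - (if k = n then s ^ (n + 1) * (t + \<alpha>) * (K n l * t ^ l) else 0))"
    by (intro sum.cong refl, subst kast_vec_monomial) (auto simp: algebra_simps)
  also have "\<dots> = (1 + s * t + \<alpha> * (s + t)) * (\<Sum>k\<le>n. \<Sum>l<n. K k l * (s ^ k * t ^ l))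
      - (1 + \<alpha> * t) * (\<Sum>l<n. K 0 l * t ^ l) - s ^ (n + 1) * (t + \<alpha>) * (\<Sum>l<n. K n l * t ^ l)"
    by (simp add: sum_subtractf sum_distrib_left sum_if)
  finally show ?thesis
    unfolding K_def by (simp add: algebra_simps)
qed

lemma kernel_relation:
  assumes inv: "is_kast_inverse n a Kinv" and kl: "k \<le> n" "l < n"
    and \<alpha>: "\<alpha> = complex_of_real a * \<i>" and p: "p = - (1 + \<alpha> * u)" and q: "q = u + \<alpha>"
  shows "q ^ n * (\<Sum>i<n. Kinv (wvert i 0) (bvert k l) * u ^ i)
    - p ^ n * (\<Sum>i<n. Kinv (wvert i n) (bvert k l) * u ^ i) = u ^ k * p ^ l * q ^ (n - 1 - l)"
proof -
  define K where "K i j = Kinv (wvert i j) (bvert k l)" for i j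
  have "u ^ k * p ^ l * q ^ (n - 1 - l) =
      (\<Sum>i<n. \<Sum>j\<le>n. vec_kast \<alpha> n (\<lambda>k l. u ^ k * p ^ l * q ^ (n - 1 - l)) i j * K i j)"
    using vec_kast_inverse[OF inv kl] unfolding \<alpha> K_def by simp
  also have "\<dots> = (\<Sum>i<n. \<Sum>j\<le>n. (if j = 0 then q ^ n * (K i 0 * u ^ i) else 0)
      - (if j = n then p ^ n * (K i n * u ^ i) else 0))"
    by (intro sum.cong refl, subst vec_kast_kernel[OF _ p q]) (auto simp: algebra_simps)
  also have "\<dots> = q ^ n * (\<Sum>i<n. K i 0 * u ^ i) - p ^ n * (\<Sum>i<n. K i n * u ^ i)"
    by (simp add: sum_subtractf sum_distrib_left)
  finally show ?thesis
    unfolding K_def ..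
qed

definition kinv_gen :: "nat \<Rightarrow> (int \<times> int \<Rightarrow> int \<times> int \<Rightarrow> complex) \<Rightarrow> nat set \<Rightarrow> nat set \<Rightarrow>
    complex \<Rightarrow> complex \<Rightarrow> complex \<Rightarrow> complex \<Rightarrow> complex" where
  "kinv_gen n Kinv J K u v s t =
     (\<Sum>i<n. \<Sum>j\<in>J. \<Sum>k\<in>K. \<Sum>l<n. Kinv (wvert i j) (bvert k l) * (u ^ i * v ^ j * s ^ k * t ^ l))"

lemma kinv_gen_eq_white_sums:
  "kinv_gen n Kinv J K u v s t =
     (\<Sum>k\<in>K. \<Sum>l<n. s ^ k * t ^ l * (\<Sum>i<n. \<Sum>j\<in>J. Kinv (wvert i j) (bvert k l) * (u ^ i * v ^ j)))"
  unfolding kinv_gen_def by (subst sum_swap_pairs) (simp add: sum_distrib_left mult_ac)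

lemma kinv_gen_eq_black_sums:
  "kinv_gen n Kinv J K u v s t =
     (\<Sum>i<n. \<Sum>j\<in>J. u ^ i * v ^ j * (\<Sum>k\<in>K. \<Sum>l<n. Kinv (wvert i j) (bvert k l) * (s ^ k * t ^ l)))"
  unfolding kinv_gen_def by (simp add: sum_distrib_left mult_ac)

lemma kinv_gen_white_relation:
  assumes inv: "is_kast_inverse n a Kinv" and K: "K \<subseteq> {..n}"
  defines "\<alpha> \<equiv> complex_of_real a * \<i>"
  shows "(1 + u * v + \<alpha> * (u + v)) * kinv_gen n Kinv {..n} K u v s t =
    v * (\<Sum>k\<in>K. (u * s) ^ k) * fpoly n (v * t) + (1 + \<alpha> * u) * kinv_gen n Kinv {0} K u v s t
    + v * (u + \<alpha>) * kinv_gen n Kinv {n} K u v s t"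
proof -
  define R where "R j k l = (\<Sum>i<n. Kinv (wvert i j) (bvert k l) * u ^ i)" for j k l
  have "(1 + u * v + \<alpha> * (u + v)) * kinv_gen n Kinv {..n} K u v s t =
      (\<Sum>k\<in>K. \<Sum>l<n. s ^ k * t ^ l * (u ^ k * v ^ (l + 1) + (1 + \<alpha> * u) * R 0 k l
        + v ^ (n + 1) * (u + \<alpha>) * R n k l))"
    unfolding kinv_gen_eq_white_sums sum_distrib_left[of "1 + u * v + \<alpha> * (u + v)"]
    using K by (intro sum.cong refl)
      (auto simp: mult.left_commute[of "1 + u * v + \<alpha> * (u + v)"] white_relation[OF inv] R_def \<alpha>_def)
  also have "\<dots> = v * (\<Sum>k\<in>K. (u * s) ^ k) * fpoly n (v * t)
      + (1 + \<alpha> * u) * (\<Sum>k\<in>K. \<Sum>l<n. s ^ k * t ^ l * R 0 k l)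
      + v * (u + \<alpha>) * (\<Sum>k\<in>K. \<Sum>l<n. s ^ k * t ^ l * (v ^ n * R n k l))"
    by (simp add: fpoly_eq_sum sum.distrib sum_distrib_left sum_distrib_right algebra_simps)
  finally show ?thesis
    unfolding kinv_gen_eq_white_sums R_def by (simp add: sum_distrib_left mult_ac)
qed

lemma kinv_gen_black_relation:
  assumes inv: "is_kast_inverse n a Kinv" and J: "J \<subseteq> {..n}"
  defines "\<alpha> \<equiv> complex_of_real a * \<i>"
  shows "(1 + s * t + \<alpha> * (s + t)) * kinv_gen n Kinv J {..n} u v s t =
    s * fpoly n (u * s) * (\<Sum>j\<in>J. (v * t) ^ j) + (1 + \<alpha> * t) * kinv_gen n Kinv J {0} u v s t
    + s * (t + \<alpha>) * kinv_gen n Kinv J {n} u v s t"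
proof -
  define R where "R i j k = (\<Sum>l<n. Kinv (wvert i j) (bvert k l) * t ^ l)" for i j k
  have "(1 + s * t + \<alpha> * (s + t)) * kinv_gen n Kinv J {..n} u v s t =
      (\<Sum>i<n. \<Sum>j\<in>J. u ^ i * v ^ j * (s ^ (i + 1) * t ^ j + (1 + \<alpha> * t) * R i j 0
        + s ^ (n + 1) * (t + \<alpha>) * R i j n))"
    unfolding kinv_gen_eq_black_sums sum_distrib_left[of "1 + s * t + \<alpha> * (s + t)"]
    using J by (intro sum.cong refl)
      (auto simp: mult.left_commute[of "1 + s * t + \<alpha> * (s + t)"] black_relation[OF inv] R_def \<alpha>_def)
  also have "\<dots> = s * fpoly n (u * s) * (\<Sum>j\<in>J. (v * t) ^ j)
      + (1 + \<alpha> * t) * (\<Sum>i<n. \<Sum>j\<in>J. u ^ i * v ^ j * R i j 0)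
      + s * (t + \<alpha>) * (\<Sum>i<n. \<Sum>j\<in>J. u ^ i * v ^ j * (s ^ n * R i j n))"
    by (simp add: fpoly_eq_sum sum.distrib sum_distrib_left sum_distrib_right algebra_simps)
  finally show ?thesis
    unfolding kinv_gen_eq_black_sums R_def by (simp add: sum_distrib_left mult_ac)
qed

lemma gen_G_eq_kinv_gen:
  "gen_G n Kinv w1 w2 b1 b2 = w1 * b2 * kinv_gen n Kinv {..n} {..n} (w1\<^sup>2) (w2\<^sup>2) (b1\<^sup>2) (b2\<^sup>2)"
proof -
  have "nat (fst (wvert i j)) = Suc (2 * i)" "nat (snd (wvert i j)) = 2 * j"
    "nat (fst (bvert k l)) = 2 * k" "nat (snd (bvert k l)) = Suc (2 * l)" for i j k l
    by (simp_all add: wvert_def bvert_def nat_add_distrib nat_mult_distrib)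
  then show ?thesis
    unfolding gen_G_def kinv_gen_def sum_aztec_W sum_aztec_B
    by (simp add: sum_distrib_left mult_ac flip: power_mult)
qed

definition corner_poly :: "nat \<Rightarrow> (int \<times> int \<Rightarrow> int \<times> int \<Rightarrow> complex) \<Rightarrow> complex \<Rightarrow> nat \<Rightarrow> nat \<Rightarrow> complex poly"
  where "corner_poly n Kinv t j k = (\<Sum>i<n. monom (\<Sum>l<n. Kinv (wvert i j) (bvert k l) * t ^ l) i)"

lemma poly_corner_poly:
  "poly (corner_poly n Kinv t j k) u = (\<Sum>l<n. t ^ l * (\<Sum>i<n. Kinv (wvert i j) (bvert k l) * u ^ i))"
  unfolding corner_poly_def poly_sum poly_monom sum_distrib_left sum_distrib_right
  by (subst sum.swap) (simp add: mult_ac)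

lemma degree_corner_poly: "degree (corner_poly n Kinv t j k) \<le> n - 1"
  unfolding corner_poly_def by (rule degree_sum_le) (auto intro: order.trans[OF degree_monom_le])

lemma kinv_gen_singletons:
  "kinv_gen n Kinv {j} {k} u v s t = v ^ j * s ^ k * poly (corner_poly n Kinv t j k) u"
  unfolding kinv_gen_def poly_corner_poly sum_distrib_left
  by (subst sum.swap) (simp add: mult_ac)

lemma kinv_gen_eq_corner_polys:
  assumes inv: "is_kast_inverse n a Kinv"
  defines "\<alpha> \<equiv> complex_of_real a * \<i>"
  assumes Cw: "1 + u * v + \<alpha> * (u + v) \<noteq> 0" and Cb: "1 + s * t + \<alpha> * (s + t) \<noteq> 0"
  shows "kinv_gen n Kinv {..n} {..n} u v s t =
    ((1 + s * t + \<alpha> * (s + t)) * (v * fpoly (n + 1) (u * s) * fpoly n (v * t))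
    + (1 + \<alpha> * u) * (s * fpoly n (u * s) + (1 + \<alpha> * t) * poly (corner_poly n Kinv t 0 0) u
        + s ^ (n + 1) * (t + \<alpha>) * poly (corner_poly n Kinv t 0 n) u)
    + v ^ (n + 1) * (u + \<alpha>) * (s * t ^ n * fpoly n (u * s) + (1 + \<alpha> * t) * poly (corner_poly n Kinv t n 0) u
        + s ^ (n + 1) * (t + \<alpha>) * poly (corner_poly n Kinv t n n) u))
    / ((1 + u * v + \<alpha> * (u + v)) * (1 + s * t + \<alpha> * (s + t)))"
    (is "_ = ?rhs / _")
proof -
  note white = kinv_gen_white_relation[OF inv order.refl, of u v s t, folded \<alpha>_def]
  note black = kinv_gen_black_relation[OF inv, of _ s t u v, folded \<alpha>_def]
  have black0: "(1 + s * t + \<alpha> * (s + t)) * kinv_gen n Kinv {0} {..n} u v s t =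
      s * fpoly n (u * s) + (1 + \<alpha> * t) * poly (corner_poly n Kinv t 0 0) u
      + s ^ (n + 1) * (t + \<alpha>) * poly (corner_poly n Kinv t 0 n) u"
    using black[of "{0}"] by (simp add: kinv_gen_singletons)
  have blackn: "(1 + s * t + \<alpha> * (s + t)) * kinv_gen n Kinv {n} {..n} u v s t =
      s * fpoly n (u * s) * (v * t) ^ n + (1 + \<alpha> * t) * (v ^ n * poly (corner_poly n Kinv t n 0) u)
      + s * (t + \<alpha>) * (v ^ n * s ^ n * poly (corner_poly n Kinv t n n) u)"
    using black[of "{n}"] by (simp add: kinv_gen_singletons)
  have "(1 + u * v + \<alpha> * (u + v)) * (1 + s * t + \<alpha> * (s + t)) * kinv_gen n Kinv {..n} {..n} u v s t =
      (1 + s * t + \<alpha> * (s + t)) * ((1 + u * v + \<alpha> * (u + v)) * kinv_gen n Kinv {..n} {..n} u v s t)"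
    by (simp only: mult_ac)
  also have "\<dots> = (1 + s * t + \<alpha> * (s + t)) * (v * fpoly (n + 1) (u * s) * fpoly n (v * t))
      + (1 + \<alpha> * u) * ((1 + s * t + \<alpha> * (s + t)) * kinv_gen n Kinv {0} {..n} u v s t)
      + v * (u + \<alpha>) * ((1 + s * t + \<alpha> * (s + t)) * kinv_gen n Kinv {n} {..n} u v s t)"
    unfolding white fpoly_Suc_eq_sum_atMost by (simp add: algebra_simps)
  also have "\<dots> = ?rhs"
    unfolding black0 blackn by (simp add: algebra_simps)
  finally show ?thesis
    using Cw Cb by (simp add: eq_divide_eq mult.commute)
qed

lemma corner_poly_relation:
  assumes inv: "is_kast_inverse n a Kinv" and k: "k \<le> n"
  defines "\<alpha> \<equiv> complex_of_real a * \<i>"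
  shows "[:\<alpha>, 1:] ^ n * corner_poly n Kinv t 0 k - [:-1, -\<alpha>:] ^ n * corner_poly n Kinv t n k =
    monom 1 k * geom_sum2 [:-t, -t * \<alpha>:] [:\<alpha>, 1:] n"
proof (rule poly_ext)
  fix u
  define p where "p = - (1 + \<alpha> * u)"
  define q where "q = u + \<alpha>"
  note kernel = kernel_relation[OF inv k _ \<alpha>_def[THEN meta_eq_to_obj_eq] p_def q_def]
  have "q ^ n * poly (corner_poly n Kinv t 0 k) u - p ^ n * poly (corner_poly n Kinv t n k) u =
      (\<Sum>l<n. t ^ l * (q ^ n * (\<Sum>i<n. Kinv (wvert i 0) (bvert k l) * u ^ i)
        - p ^ n * (\<Sum>i<n. Kinv (wvert i n) (bvert k l) * u ^ i)))"
    unfolding poly_corner_poly by (simp add: sum_distrib_left sum_subtractf algebra_simps)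
  also have "\<dots> = (\<Sum>l<n. t ^ l * (u ^ k * p ^ l * q ^ (n - 1 - l)))"
    by (rule sum.cong[OF refl]) (simp add: kernel)
  also have "\<dots> = u ^ k * geom_sum2 (t * p) q n"
    by (simp add: geom_sum2_def sum_distrib_left power_mult_distrib mult_ac)
  finally show "poly ([:\<alpha>, 1:] ^ n * corner_poly n Kinv t 0 k - [:-1, -\<alpha>:] ^ n * corner_poly n Kinv t n k) u =
      poly (monom 1 k * geom_sum2 [:-t, -t * \<alpha>:] [:\<alpha>, 1:] n) u"
    by (simp add: poly_geom_sum2 poly_monom p_def q_def algebra_simps)
qed

section \<open>Solving for the corner polynomials\<close>

lemma pow_mult_eq_pow_mult_imp_zero:
  fixes p q D E :: "'a::idom poly"
  assumes eq: "q ^ n * D = p ^ n * E" and p: "poly p r = 0" and q: "poly q r \<noteq> 0"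
    and deg: "degree D < n"
  shows "D = 0"
proof (rule ccontr)
  assume "D \<noteq> 0"
  moreover have "q \<noteq> 0" using q by auto
  ultimately have nz: "q ^ n * D \<noteq> 0" by simp
  have "[:-r, 1:] ^ n dvd q ^ n * D"
    unfolding eq using p by (simp add: dvd_iff_poly_eq_0 dvd_power_same)
  with nz have "n \<le> order r (q ^ n * D)"
    by (simp only: order_divides) simp
  also have "order r (q ^ n * D) = order r D"
    using nz q by (simp add: order_mult order_0I)
  also have "\<dots> \<le> degree D"
    using \<open>D \<noteq> 0\<close> by (rule order_degree)
  finally show False using deg by simp
qed

lemma pow_decomposition_unique:
  fixes p q A B A' B' :: "'a::idom poly"
  assumes eq: "q ^ n * A - p ^ n * B = q ^ n * A' - p ^ n * B'"
    and p: "poly p r = 0" "p \<noteq> 0" and q: "poly q r \<noteq> 0"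
    and deg: "degree A < n" "degree A' < n"
  shows "A = A' \<and> B = B'"
proof -
  from eq have diff: "q ^ n * (A - A') = p ^ n * (B - B')"
    by (simp add: algebra_simps)
  moreover have "degree (A - A') < n"
    using deg degree_diff_le_max[of A A'] by simp
  ultimately have "A - A' = 0"
    using p q by (intro pow_mult_eq_pow_mult_imp_zero)
  with diff p show ?thesis by simp
qed

lemma geom_sum2_combination:
  fixes D p q s t \<gamma> \<delta> Z :: "'a::comm_ring_1"
  assumes D: "D = q - t * p" and \<gamma>: "D * \<gamma> = s - Z * p" and \<delta>: "D * \<delta> = s * t - Z * q"
  shows "D * (q ^ n * (\<gamma> * geom_sum2 (Z * p) s n) - p ^ n * (\<delta> * geom_sum2 (Z * q) (s * t) n)) =
    D * (s ^ n * geom_sum2 (t * p) q n)"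
proof -
  have "D * (q ^ n * (\<gamma> * geom_sum2 (Z * p) s n) - p ^ n * (\<delta> * geom_sum2 (Z * q) (s * t) n)) =
      q ^ n * ((s - Z * p) * geom_sum2 (Z * p) s n) - p ^ n * ((s * t - Z * q) * geom_sum2 (Z * q) (s * t) n)"
    by (simp flip: \<gamma> \<delta> add: algebra_simps)
  also have "\<dots> = s ^ n * (q ^ n - (t * p) ^ n)"
    unfolding diff_mult_geom_sum2 by (simp add: algebra_simps)
  also have "\<dots> = s ^ n * ((q - t * p) * geom_sum2 (t * p) q n)"
    by (simp only: diff_mult_geom_sum2)
  also have "\<dots> = D * (s ^ n * geom_sum2 (t * p) q n)"
    by (simp add: D mult_ac)
  finally show ?thesis .
qed

lemma imag_mult_self_neq_one: "complex_of_real a * \<i> * (complex_of_real a * \<i>) \<noteq> 1"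
proof -
  have "complex_of_real a * \<i> * (complex_of_real a * \<i>) = complex_of_real (- (a * a))"
    by (simp add: algebra_simps)
  moreover have "- (a * a) \<noteq> 1"
    by (smt (verit) zero_le_square)
  ultimately show ?thesis
    by (metis of_real_1 of_real_eq_iff)
qed

lemma corner_polys_eq:
  assumes inv: "is_kast_inverse n a Kinv" and "n \<ge> 1" "a \<noteq> 0" and k: "k \<le> n"
    and \<alpha>: "\<alpha> = complex_of_real a * \<i>"
    and s: "s ^ n = monom 1 k" "degree s \<le> 1"
    and \<gamma>: "[:\<alpha> + t, 1 + \<alpha> * t:] * [:\<gamma>:] = s - [:Z:] * [:-1, -\<alpha>:]"
    and \<delta>: "[:\<alpha> + t, 1 + \<alpha> * t:] * [:\<delta>:] = s * [:t:] - [:Z:] * [:\<alpha>, 1:]"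
  shows "corner_poly n Kinv t 0 k = smult \<gamma> (geom_sum2 (smult Z [:-1, -\<alpha>:]) s n)
    \<and> corner_poly n Kinv t n k = smult \<delta> (geom_sum2 (smult Z [:\<alpha>, 1:]) (s * [:t:]) n)"
proof -
  define p where "p = [:-1, -\<alpha>:]"
  define q where "q = [:\<alpha>, 1:]"
  define D where "D = [:\<alpha> + t, 1 + \<alpha> * t:]"
  have \<alpha>0: "\<alpha> \<noteq> 0"
    using \<open>a \<noteq> 0\<close> by (simp add: \<alpha>)
  have \<alpha>1: "\<alpha> * \<alpha> \<noteq> 1"
    using imag_mult_self_neq_one[of a] by (simp add: \<alpha>)
  have "D \<noteq> 0"
  proof
    assume "D = 0"
    then have "t = - \<alpha>" "1 + \<alpha> * t = 0"
      by (auto simp: D_def add_eq_0_iff)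
    with \<alpha>1 show False by simp
  qed
  have "D = q - [:t:] * p"
    by (simp add: D_def p_def q_def)
  from geom_sum2_combination[OF this \<gamma>[folded D_def p_def] \<delta>[folded D_def q_def], of n] \<open>D \<noteq> 0\<close>
  have "q ^ n * smult \<gamma> (geom_sum2 (smult Z p) s n) - p ^ n * smult \<delta> (geom_sum2 (smult Z q) (s * [:t:]) n)
      = monom 1 k * geom_sum2 [:-t, -t * \<alpha>:] q n"
    by (simp add: s p_def mult_ac)
  also have "\<dots> = q ^ n * corner_poly n Kinv t 0 k - p ^ n * corner_poly n Kinv t n k"
    using corner_poly_relation[OF inv k] by (simp add: \<alpha> p_def q_def)
  finally have "q ^ n * corner_poly n Kinv t 0 k - p ^ n * corner_poly n Kinv t n k =
      q ^ n * smult \<gamma> (geom_sum2 (smult Z p) s n) - p ^ n * smult \<delta> (geom_sum2 (smult Z q) (s * [:t:]) n)" ..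
  moreover have "poly p (- 1 / \<alpha>) = 0" "p \<noteq> 0" "poly q (- 1 / \<alpha>) \<noteq> 0"
    using \<alpha>0 \<alpha>1 by (auto simp: p_def q_def field_simps)
  moreover have "degree (corner_poly n Kinv t 0 k) < n"
    using degree_corner_poly[of n Kinv t 0 k] \<open>n \<ge> 1\<close> by simp
  moreover have "degree (smult \<gamma> (geom_sum2 (smult Z p) s n)) \<le> n - 1"
    using s(2) by (intro order.trans[OF degree_smult_le] degree_geom_sum2)
      (simp_all add: p_def degree_pCons_le)
  then have "degree (smult \<gamma> (geom_sum2 (smult Z p) s n)) < n"
    using \<open>n \<ge> 1\<close> by simp
  ultimately show ?thesis
    unfolding p_def q_def by (rule pow_decomposition_unique)
qed

lemma poly_corner_polys_0:
  assumes inv: "is_kast_inverse n a Kinv" and "n \<ge> 1" "a \<noteq> 0"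
  defines "\<alpha> \<equiv> complex_of_real a * \<i>"
  shows "poly (corner_poly n Kinv t 0 0) u =
      - \<alpha> / (1 - \<alpha> * \<alpha>) * geom_sum2 ((1 + \<alpha> * t) * (1 + \<alpha> * u) / (1 - \<alpha> * \<alpha>)) 1 n"
    and "poly (corner_poly n Kinv t n 0) u =
      1 / (1 - \<alpha> * \<alpha>) * geom_sum2 (- (1 + \<alpha> * t) * (u + \<alpha>) / (1 - \<alpha> * \<alpha>)) t n"
proof -
  have "1 - \<alpha> * \<alpha> \<noteq> 0"
    using imag_mult_self_neq_one[of a] by (simp add: \<alpha>_def)
  then have c: "inverse (1 - \<alpha> * \<alpha>) * (1 - \<alpha> * \<alpha>) = 1" by simp
  have s: "1 ^ n = monom 1 0" "degree (1 :: complex poly) \<le> 1"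
    by simp_all
  have "[:\<alpha> + t, 1 + \<alpha> * t:] * [:- \<alpha> / (1 - \<alpha> * \<alpha>):] =
      1 - [:- (1 + \<alpha> * t) / (1 - \<alpha> * \<alpha>):] * [:- 1, - \<alpha>:]"
    "[:\<alpha> + t, 1 + \<alpha> * t:] * [:1 / (1 - \<alpha> * \<alpha>):] =
      1 * [:t:] - [:- (1 + \<alpha> * t) / (1 - \<alpha> * \<alpha>):] * [:\<alpha>, 1:]"
    by (rule poly_ext, use c in \<open>simp add: divide_inverse; algebra\<close>)+
  from corner_polys_eq[OF inv assms(2,3) le0 \<alpha>_def[THEN meta_eq_to_obj_eq] s this]
  show "poly (corner_poly n Kinv t 0 0) u =
      - \<alpha> / (1 - \<alpha> * \<alpha>) * geom_sum2 ((1 + \<alpha> * t) * (1 + \<alpha> * u) / (1 - \<alpha> * \<alpha>)) 1 n"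
    and "poly (corner_poly n Kinv t n 0) u =
      1 / (1 - \<alpha> * \<alpha>) * geom_sum2 (- (1 + \<alpha> * t) * (u + \<alpha>) / (1 - \<alpha> * \<alpha>)) t n"
    by (simp_all add: poly_geom_sum2 algebra_simps flip: add_divide_distrib diff_divide_distrib)
qed

lemma poly_corner_polys_n:
  assumes inv: "is_kast_inverse n a Kinv" and "n \<ge> 1" "a \<noteq> 0"
  defines "\<alpha> \<equiv> complex_of_real a * \<i>"
  shows "poly (corner_poly n Kinv t 0 n) u =
      1 / (1 - \<alpha> * \<alpha>) * geom_sum2 (- (t + \<alpha>) * (1 + \<alpha> * u) / (1 - \<alpha> * \<alpha>)) u n"
    and "poly (corner_poly n Kinv t n n) u =
      - \<alpha> / (1 - \<alpha> * \<alpha>) * geom_sum2 ((t + \<alpha>) * (u + \<alpha>) / (1 - \<alpha> * \<alpha>)) (u * t) n"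
proof -
  have "1 - \<alpha> * \<alpha> \<noteq> 0"
    using imag_mult_self_neq_one[of a] by (simp add: \<alpha>_def)
  then have c: "inverse (1 - \<alpha> * \<alpha>) * (1 - \<alpha> * \<alpha>) = 1" by simp
  have s: "[:0, 1:] ^ n = monom 1 n" "degree [:0, 1 :: complex:] \<le> 1"
    by (simp_all add: monom_altdef)
  have "[:\<alpha> + t, 1 + \<alpha> * t:] * [:1 / (1 - \<alpha> * \<alpha>):] =
      [:0, 1:] - [:(t + \<alpha>) / (1 - \<alpha> * \<alpha>):] * [:- 1, - \<alpha>:]"
    "[:\<alpha> + t, 1 + \<alpha> * t:] * [:- \<alpha> / (1 - \<alpha> * \<alpha>):] =
      [:0, 1:] * [:t:] - [:(t + \<alpha>) / (1 - \<alpha> * \<alpha>):] * [:\<alpha>, 1:]"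
    by (rule poly_ext, use c in \<open>simp add: divide_inverse; algebra\<close>)+
  from corner_polys_eq[OF inv assms(2,3) order.refl \<alpha>_def[THEN meta_eq_to_obj_eq] s this]
  show "poly (corner_poly n Kinv t 0 n) u =
      1 / (1 - \<alpha> * \<alpha>) * geom_sum2 (- (t + \<alpha>) * (1 + \<alpha> * u) / (1 - \<alpha> * \<alpha>)) u n"
    and "poly (corner_poly n Kinv t n n) u =
      - \<alpha> / (1 - \<alpha> * \<alpha>) * geom_sum2 ((t + \<alpha>) * (u + \<alpha>) / (1 - \<alpha> * \<alpha>)) (u * t) n"
    by (simp_all add: poly_geom_sum2 algebra_simps flip: add_divide_distrib diff_divide_distrib)
qed

lemma Fn_eq_geom_sum2:
  assumes "\<alpha> = A * \<i>"
  shows "Fn n x y A = - \<alpha> / (1 - \<alpha> * \<alpha>) * geom_sum2 ((1 + \<alpha> * y) * (1 + \<alpha> * x) / (1 - \<alpha> * \<alpha>)) 1 n"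
proof -
  have "1 + A\<^sup>2 = 1 - \<alpha> * \<alpha>" by (simp add: assms power2_eq_square algebra_simps)
  then show ?thesis
    by (simp add: Fn_def fpoly_eq_geom_sum2 assms mult_ac)
qed

lemma Fn_inverse_eq_geom_sum2:
  fixes A :: complex
  assumes "A \<noteq> 0" and \<alpha>: "\<alpha> = A * \<i>"
  shows "\<i> / A * Fn n x y (1 / A) =
    1 / (1 - \<alpha> * \<alpha>) * geom_sum2 ((\<alpha> - y) * (\<alpha> - x) / (\<alpha> * \<alpha> - 1)) 1 n"
proof -
  have "\<alpha> \<noteq> 0" using assms by simp
  have inv: "1 / A * \<i> = - 1 / \<alpha>"
    using \<open>A \<noteq> 0\<close> by (simp add: \<alpha> field_simps)
  have "\<i> / A * Fn n x y (1 / A) = \<i> / A * (- (- 1 / \<alpha>) / (1 - - 1 / \<alpha> * (- 1 / \<alpha>))) *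
      geom_sum2 ((1 + - 1 / \<alpha> * y) * (1 + - 1 / \<alpha> * x) / (1 - - 1 / \<alpha> * (- 1 / \<alpha>))) 1 n"
    by (simp only: Fn_eq_geom_sum2[OF inv[symmetric]] mult.assoc)
  moreover have "\<i> / A * (- (- 1 / \<alpha>) / (1 - - 1 / \<alpha> * (- 1 / \<alpha>))) = 1 / (1 - \<alpha> * \<alpha>)"
    using \<open>\<alpha> \<noteq> 0\<close> \<open>A \<noteq> 0\<close>
    by (cases "1 - \<alpha> * \<alpha> = 0") (simp_all add: \<alpha> field_simps)
  moreover have "(1 + - 1 / \<alpha> * y) * (1 + - 1 / \<alpha> * x) / (1 - - 1 / \<alpha> * (- 1 / \<alpha>)) =
      (\<alpha> - y) * (\<alpha> - x) / (\<alpha> * \<alpha> - 1)"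
    using \<open>\<alpha> \<noteq> 0\<close> by (cases "\<alpha> * \<alpha> - 1 = 0") (simp_all add: field_simps)
  ultimately show ?thesis
    by (simp only:)
qed

lemma power_odd_eq: "n \<ge> 1 \<Longrightarrow> (w::'a::monoid_mult) ^ (2 * n - 1) = w * (w ^ 2) ^ (n - 1)"
  by (cases n) (simp_all add: power_mult)

lemma F00_eq:
  fixes A :: complex
  defines "\<alpha> \<equiv> A * \<i>"
  shows "F00 n w1 w2 b1 b2 A = w1 * b2 *
    (- \<alpha> / (1 - \<alpha> * \<alpha>) * geom_sum2 ((1 + \<alpha> * b2\<^sup>2) * (1 + \<alpha> * w1\<^sup>2) / (1 - \<alpha> * \<alpha>)) 1 n)"
  by (simp add: F00_def Fn_eq_geom_sum2[OF \<alpha>_def[THEN meta_eq_to_obj_eq]] mult_ac)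

lemma F01_eq:
  fixes A :: complex
  assumes "n \<ge> 1" "A \<noteq> 0" "w1 \<noteq> 0"
  defines "\<alpha> \<equiv> A * \<i>"
  shows "F01 n w1 w2 b1 b2 A = w1 * b2 * (b1\<^sup>2) ^ n *
    (1 / (1 - \<alpha> * \<alpha>) * geom_sum2 (- (b2\<^sup>2 + \<alpha>) * (1 + \<alpha> * w1\<^sup>2) / (1 - \<alpha> * \<alpha>)) (w1\<^sup>2) n)"
proof -
  define X where "X = (\<alpha> - - b2\<^sup>2) * (\<alpha> - - 1 / w1\<^sup>2) / (\<alpha> * \<alpha> - 1)"
  have scale: "w1\<^sup>2 * X = - (b2\<^sup>2 + \<alpha>) * (1 + \<alpha> * w1\<^sup>2) / (1 - \<alpha> * \<alpha>)"
    using assms(3) by (cases "1 - \<alpha> * \<alpha> = 0") (simp_all add: X_def field_simps)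
  have "F01 n w1 w2 b1 b2 A = w1 * b2 * (b1\<^sup>2) ^ n * ((w1\<^sup>2) ^ (n - 1) * (\<i> / A * Fn n (- 1 / w1\<^sup>2) (- b2\<^sup>2) (1 / A)))"
    unfolding F01_def power_odd_eq[OF assms(1)] by (simp add: mult_ac flip: power_mult)
  also have "\<dots> = w1 * b2 * (b1\<^sup>2) ^ n * (1 / (1 - \<alpha> * \<alpha>) * ((w1\<^sup>2) ^ (n - 1) * geom_sum2 X 1 n))"
    by (subst Fn_inverse_eq_geom_sum2[OF assms(2) \<alpha>_def[THEN meta_eq_to_obj_eq]]) (simp add: X_def mult_ac)
  finally show ?thesis
    by (simp only: geom_sum2_one_scale scale)
qed

lemma F10_eq:
  fixes A :: complex
  assumes "n \<ge> 1" "A \<noteq> 0" "b2 \<noteq> 0"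
  defines "\<alpha> \<equiv> A * \<i>"
  shows "F10 n w1 w2 b1 b2 A = w1 * b2 * (w2\<^sup>2) ^ n *
    (1 / (1 - \<alpha> * \<alpha>) * geom_sum2 (- (1 + \<alpha> * b2\<^sup>2) * (w1\<^sup>2 + \<alpha>) / (1 - \<alpha> * \<alpha>)) (b2\<^sup>2) n)"
proof -
  define X where "X = (\<alpha> - - 1 / b2\<^sup>2) * (\<alpha> - - w1\<^sup>2) / (\<alpha> * \<alpha> - 1)"
  have scale: "b2\<^sup>2 * X = - (1 + \<alpha> * b2\<^sup>2) * (w1\<^sup>2 + \<alpha>) / (1 - \<alpha> * \<alpha>)"
    using assms(3) by (cases "1 - \<alpha> * \<alpha> = 0") (simp_all add: X_def field_simps)
  have "F10 n w1 w2 b1 b2 A = w1 * b2 * (w2\<^sup>2) ^ n * ((b2\<^sup>2) ^ (n - 1) * (\<i> / A * Fn n (- w1\<^sup>2) (- 1 / b2\<^sup>2) (1 / A)))"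
    unfolding F10_def power_odd_eq[OF assms(1)] by (simp add: mult_ac flip: power_mult)
  also have "\<dots> = w1 * b2 * (w2\<^sup>2) ^ n * (1 / (1 - \<alpha> * \<alpha>) * ((b2\<^sup>2) ^ (n - 1) * geom_sum2 X 1 n))"
    by (subst Fn_inverse_eq_geom_sum2[OF assms(2) \<alpha>_def[THEN meta_eq_to_obj_eq]]) (simp add: X_def mult_ac)
  finally show ?thesis
    by (simp only: geom_sum2_one_scale scale)
qed

lemma F11_eq:
  fixes A :: complex
  assumes "n \<ge> 1" "w1 \<noteq> 0" "b2 \<noteq> 0"
  defines "\<alpha> \<equiv> A * \<i>"
  shows "F11 n w1 w2 b1 b2 A = w1 * b2 * (w2\<^sup>2) ^ n * (b1\<^sup>2) ^ n *
    (- \<alpha> / (1 - \<alpha> * \<alpha>) * geom_sum2 ((b2\<^sup>2 + \<alpha>) * (w1\<^sup>2 + \<alpha>) / (1 - \<alpha> * \<alpha>)) (w1\<^sup>2 * b2\<^sup>2) n)"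
proof -
  define X where "X = (1 + \<alpha> * (1 / b2\<^sup>2)) * (1 + \<alpha> * (1 / w1\<^sup>2)) / (1 - \<alpha> * \<alpha>)"
  have scale: "w1\<^sup>2 * b2\<^sup>2 * X = (b2\<^sup>2 + \<alpha>) * (w1\<^sup>2 + \<alpha>) / (1 - \<alpha> * \<alpha>)"
    using assms(2,3) by (cases "1 - \<alpha> * \<alpha> = 0") (simp_all add: X_def field_simps)
  have "F11 n w1 w2 b1 b2 A = Fn n (1 / w1\<^sup>2) (1 / b2\<^sup>2) A * (w1 * (w1\<^sup>2) ^ (n - 1)) * (w2\<^sup>2) ^ n
      * (b1\<^sup>2) ^ n * (b2 * (b2\<^sup>2) ^ (n - 1))"
    unfolding F11_def power_odd_eq[OF assms(1)] by (simp add: power_mult)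
  also have "\<dots> = w1 * b2 * (w2\<^sup>2) ^ n * (b1\<^sup>2) ^ n *
      (- \<alpha> / (1 - \<alpha> * \<alpha>) * ((w1\<^sup>2 * b2\<^sup>2) ^ (n - 1) * geom_sum2 X 1 n))"
    by (simp add: Fn_eq_geom_sum2[OF \<alpha>_def[THEN meta_eq_to_obj_eq]] X_def power_mult_distrib mult_ac)
  finally show ?thesis
    by (simp only: geom_sum2_one_scale scale)
qed

lemma F_eq_corner_polys:
  assumes inv: "is_kast_inverse n a Kinv" and "n \<ge> 1" "a \<noteq> 0" "w1 \<noteq> 0" "b2 \<noteq> 0"
  defines "A \<equiv> complex_of_real a"
  shows "F00 n w1 w2 b1 b2 A = w1 * b2 * poly (corner_poly n Kinv (b2\<^sup>2) 0 0) (w1\<^sup>2)"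
    and "F01 n w1 w2 b1 b2 A = w1 * b2 * (b1\<^sup>2) ^ n * poly (corner_poly n Kinv (b2\<^sup>2) 0 n) (w1\<^sup>2)"
    and "F10 n w1 w2 b1 b2 A = w1 * b2 * (w2\<^sup>2) ^ n * poly (corner_poly n Kinv (b2\<^sup>2) n 0) (w1\<^sup>2)"
    and "F11 n w1 w2 b1 b2 A =
      w1 * b2 * (w2\<^sup>2) ^ n * (b1\<^sup>2) ^ n * poly (corner_poly n Kinv (b2\<^sup>2) n n) (w1\<^sup>2)"
  using assms
  by (simp_all add: A_def F00_eq F01_eq F10_eq F11_eq poly_corner_polys_0[OF inv] poly_corner_polys_n[OF inv])

theorem theorem2:
  fixes n :: nat and a :: real and Kinv :: "int \<times> int \<Rightarrow> int \<times> int \<Rightarrow> complex"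
    and w1 w2 b1 b2 :: complex
  assumes "n \<ge> 1" and "a > 0"
    and "is_kast_inverse n a Kinv"
    and "w1 \<noteq> 0" and "b2 \<noteq> 0"
    and "Cden (complex_of_real a) w1 w2 \<noteq> 0" and "Cden (complex_of_real a) b1 b2 \<noteq> 0"
  shows "gen_G n Kinv w1 w2 b1 b2 =
      (let A = complex_of_real a;
           Cw = Cden A w1 w2; Cb = Cden A b1 b2;
           f00 = F00 n w1 w2 b1 b2 A; f01 = F01 n w1 w2 b1 b2 A;
           f10 = F10 n w1 w2 b1 b2 A; f11 = F11 n w1 w2 b1 b2 A
       in w1 * w2\<^sup>2 * b2 * fpoly (n + 1) (w1\<^sup>2 * b1\<^sup>2) * fpoly n (w2\<^sup>2 * b2\<^sup>2) / Cw
        + (1 + \<i> * A * w1\<^sup>2) *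
            ((1 + \<i> * A * b2\<^sup>2) * f00
              + b1\<^sup>2 * (b2 * w1 * fpoly n (b1\<^sup>2 * w1\<^sup>2) + (\<i> * A + b2\<^sup>2) * f01))
            / (Cw * Cb)
        + (\<i> * A + w1\<^sup>2) * w2\<^sup>2 *
            (b1\<^sup>2 * b2 ^ (2 * n + 1) * w1 * w2 ^ (2 * n) * fpoly n (b1\<^sup>2 * w1\<^sup>2)
              + (1 + \<i> * A * b2\<^sup>2) * f10 + b1\<^sup>2 * (\<i> * A + b2\<^sup>2) * f11)
            / (Cw * Cb))"
proof -
  define u v s t where "u = w1\<^sup>2" and "v = w2\<^sup>2" and "s = b1\<^sup>2" and "t = b2\<^sup>2"
  define \<alpha> where "\<alpha> = complex_of_real a * \<i>"
  define Cw Cb where "Cw = 1 + u * v + \<alpha> * (u + v)" and "Cb = 1 + s * t + \<alpha> * (s + t)"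
  have Cden: "Cden (complex_of_real a) w1 w2 = Cw" "Cden (complex_of_real a) b1 b2 = Cb"
    by (simp_all add: Cden_def u_def v_def s_def t_def \<alpha>_def Cw_def Cb_def algebra_simps)
  then have "Cw \<noteq> 0" "Cb \<noteq> 0"
    using assms(6,7) by simp_all
  have "a \<noteq> 0" using \<open>a > 0\<close> by simp
  note G = kinv_gen_eq_corner_polys[OF assms(3), where u = u and v = v and s = s and t = t,
      folded \<alpha>_def, folded Cw_def Cb_def, OF \<open>Cw \<noteq> 0\<close> \<open>Cb \<noteq> 0\<close>]
  note F = F_eq_corner_polys[OF assms(3,1) \<open>a \<noteq> 0\<close> assms(4,5), folded u_def v_def s_def t_def]
  have pw: "b2 ^ (2 * n + 1) = b2 * t ^ n" "w2 ^ (2 * n) = v ^ n"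
    by (simp_all add: t_def v_def power_mult)
  have "\<i> * complex_of_real a = \<alpha>"
    by (simp add: \<alpha>_def)
  then show ?thesis
    unfolding Let_def gen_G_eq_kinv_gen Cden F pw u_def[symmetric] v_def[symmetric] s_def[symmetric]
      t_def[symmetric] G
    using \<open>Cw \<noteq> 0\<close> \<open>Cb \<noteq> 0\<close> by (simp add: divide_simps) (simp add: algebra_simps)
qed

end
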